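(* Let $n\in\mathbb{N}$ with $n>1$ and $r:=1/n$. The unique solution $u$ of $D_ru=0$ in $(0,1)$, $u=0$ in $[-r,0]$, $u=1$ in $[1,1+r]$ is discontinuous (it has no continuous representative on $[-r,1+r]$).
   Context: $D_ru(x):=\dfrac{u(x+r)+u(x-r)-2u(x)}{r^2}$; the equation is required a.e. in $(0,1)$ and solutions are identified up to null sets. *)

theory Defs
  imports "HOL-Analysis.Analysis"
begin

definition Dr :: "real \<Rightarrow> (real \<Rightarrow> real) \<Rightarrow> real \<Rightarrow> real" where
  "Dr r u x = (u (x + r) + u (x - r) - 2 * u x) / r ^ 2"

definition is_sol :: "real \<Rightarrow> (real \<Rightarrow> real) \<Rightarrow> bool" where
  "is_sol r u \<longleftrightarrow>
     (AE x in lebesgue. x \<in> {0<..<1} \<longrightarrow> Dr r u x = 0) \<and>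
     (AE x in lebesgue. x \<in> {-r..0} \<longrightarrow> u x = 0) \<and>
     (AE x in lebesgue. x \<in> {1..1+r} \<longrightarrow> u x = 1)"

end

theory Submission
  imports Defs
begin

text \<open>
  For \<open>r = 1/n\<close>, the equation \<open>D\<^sub>r u = 0\<close> only couples values of \<open>u\<close> on a grid
  \<open>(j + \<theta>)/n\<close> with fixed offset \<open>\<theta> \<in> (0,1)\<close>. Along such a grid the values form a sequence
  with vanishing second differences, i.e. an arithmetic progression, running from \<open>0\<close> at the
  grid point in \<open>(-r,0)\<close> to \<open>1\<close> at the grid point in \<open>(1,1+r)\<close> across \<open>n+2\<close> points. Hence the
  solution is the staircase \<open>(\<lfloor>nx\<rfloor> + 1)/(n + 1)\<close>, which jumps by \<open>1/(n+1)\<close> at \<open>x = 0\<close>;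
  a continuous representative would have to equal both one-sided values there.
\<close>

definition staircase :: "nat \<Rightarrow> real \<Rightarrow> real" where
  "staircase n x = (of_int \<lfloor>x * real n\<rfloor> + 1) / (real n + 1)"

lemma staircase_eq:
  assumes "of_int k \<le> x * real n" "x * real n < of_int k + 1"
  shows "staircase n x = (of_int k + 1) / (real n + 1)"
proof -
  have "\<lfloor>x * real n\<rfloor> = k" using assms by (simp add: floor_eq_iff)
  then show ?thesis unfolding staircase_def by simp
qed

lemma staircase_eq_0:
  assumes "n > 0" "-(1 / real n) \<le> x" "x < 0"
  shows "staircase n x = 0"
proof -
  have "-1 \<le> x * real n" "x * real n < 0"
    using assms by (auto simp: field_simps mult_neg_pos)
  then show ?thesis using staircase_eq[of "-1" x n] by simp
qed

lemma staircase_eq_first_step: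
  assumes "n > 0" "0 \<le> x" "x < 1 / real n"
  shows "staircase n x = 1 / (real n + 1)"
proof -
  have "0 \<le> x * real n" "x * real n < 1"
    using assms by (auto simp: field_simps)
  then show ?thesis using staircase_eq[of 0 x n] by simp
qed

lemma Dr_staircase:
  assumes "n > 0"
  shows "Dr (1 / real n) (staircase n) x = 0"
proof -
  have "(x + 1 / real n) * real n = x * real n + 1" "(x - 1 / real n) * real n = x * real n - 1"
    using assms by (simp_all add: field_simps)
  then show ?thesis unfolding Dr_def staircase_def by (simp add: divide_simps)
qed

lemma AE_lebesgue_translate:
  fixes c :: "'a::euclidean_space"
  assumes "AE x in lebesgue. P x"
  shows "AE x in lebesgue. P (x + c)"
proof -
  obtain N where N: "N \<in> null_sets lebesgue" "{x \<in> space lebesgue. \<not> P x} \<subseteq> N"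
    using assms unfolding eventually_ae_filter by blast
  have "(+) (-c) ` N \<in> null_sets lebesgue"
    using N(1) negligible_translation negligible_iff_null_sets by blast
  moreover have "{x \<in> space lebesgue. \<not> P (x + c)} \<subseteq> (+) (-c) ` N"
    using N(2) by (force intro: image_eqI[where x = "_ + c"])
  ultimately show ?thesis by (rule AE_I')
qed

lemma AE_lebesgue_neq: "AE x in lebesgue. x \<noteq> (c::'a::euclidean_space)"
  by (rule AE_completion[OF AE_lborel_singleton])

lemma AE_lebesgue_mult_not_Ints:
  assumes "n > 0"
  shows "AE x in lebesgue. x * real n \<notin> \<int>"
proof -
  have "AE x in lebesgue. \<forall>i \<in> UNIV. x \<noteq> of_int i / real n"
    by (rule AE_ball_countable') (auto intro: AE_lebesgue_neq)
  then show ?thesis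
    by eventually_elim (use assms in \<open>auto elim!: Ints_cases simp: field_simps\<close>)
qed

lemma arith_progression_if_second_difference_zero:
  fixes b :: "nat \<Rightarrow> real"
  assumes rec: "\<And>m. 1 \<le> m \<Longrightarrow> m \<le> n \<Longrightarrow> b (Suc m) = 2 * b m - b (m - 1)"
  shows "m \<le> Suc n \<Longrightarrow> b m = b 0 + real m * (b 1 - b 0)"
proof (induction m rule: less_induct)
  case (less m)
  show ?case
  proof (cases "m \<le> 1")
    case True
    then show ?thesis by (cases m) auto
  next
    case False
    then obtain k where k: "m = Suc k" "1 \<le> k" "k \<le> n"
      using less.prems by (cases m) auto
    have "b m = 2 * b k - b (k - 1)" using rec k by simp
    also have "\<dots> = b 0 + real m * (b 1 - b 0)"
      using less.IH[of k] less.IH[of "k - 1"] k by (simp add: of_nat_diff algebra_simps) linarith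
    finally show ?thesis .
  qed
qed

lemma grid_values_eq:
  fixes u :: "real \<Rightarrow> real" and \<theta> :: real and j :: int
  assumes "n > 0"
    and harmonic: "\<And>j::int. 0 \<le> j \<Longrightarrow> j < int n \<Longrightarrow> Dr (1 / real n) u ((j + \<theta>) / n) = 0"
    and left: "u ((\<theta> - 1) / n) = 0"
    and right: "u ((n + \<theta>) / n) = 1"
    and j: "-1 \<le> j" "j \<le> int n"
  shows "u ((of_int j + \<theta>) / n) = (of_int j + 1) / (real n + 1)"
proof -
  define b where "b m = u ((real m - 1 + \<theta>) / n)" for m :: nat
  have rec: "b (Suc m) = 2 * b m - b (m - 1)" if m: "1 \<le> m" "m \<le> n" for m
  proof -
    let ?p = "(real m - 1 + \<theta>) / n"
    have "Dr (1 / real n) u ?p = 0"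
      using harmonic[of "int m - 1"] m by simp
    then have "u (?p + 1 / n) + u (?p - 1 / n) = 2 * u ?p"
      using assms(1) unfolding Dr_def by simp
    moreover have "?p + 1 / n = (real (Suc m) - 1 + \<theta>) / n"
      using assms(1) by (simp add: field_simps)
    moreover have "?p - 1 / n = (real (m - 1) - 1 + \<theta>) / n"
      using assms(1) m by (simp add: of_nat_diff field_simps)
    ultimately show ?thesis unfolding b_def by simp
  qed
  have "b 0 = 0" "b (Suc n) = 1"
    using left right unfolding b_def by simp_all
  then have bm: "b m = real m / (real n + 1)" if "m \<le> Suc n" for m
  proof -
    have "b m = real m * b 1"
      using arith_progression_if_second_difference_zero[of n b, OF rec that] \<open>b 0 = 0\<close> by simp
    moreover have "1 = (1 + real n) * b 1"
      using arith_progression_if_second_difference_zero[of n b "Suc n", OF rec] \<open>b 0 = 0\<close> \<open>b (Suc n) = 1\<close>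
      by simp
    ultimately show ?thesis by (simp add: field_simps)
  qed
  have "u ((of_int j + \<theta>) / n) = b (nat (j + 1))"
    unfolding b_def using j by simp
  also have "\<dots> = (of_int j + 1) / (real n + 1)"
    using bm[of "nat (j + 1)"] j by simp
  finally show ?thesis .
qed

lemma staircase_is_sol:
  assumes "n > 0"
  shows "is_sol (1 / real n) (staircase n)"
proof -
  have "AE x in lebesgue. x \<in> {-(1 / real n)..0} \<longrightarrow> staircase n x = 0"
    using AE_lebesgue_neq[of 0]
    by eventually_elim (use assms staircase_eq_0 in auto)
  moreover have "AE x in lebesgue. x \<in> {1..1 + 1 / real n} \<longrightarrow> staircase n x = 1"
    using AE_lebesgue_neq[of "1 + 1 / real n"]
  proof eventually_elim
    case (elim x)
    show ?case
    proof
      assume "x \<in> {1..1 + 1 / real n}"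
      then have "real n \<le> x * real n" "x * real n < real n + 1"
        using elim assms by (auto simp: field_simps)
      then show "staircase n x = 1"
        using staircase_eq[of "int n" x n] by simp
    qed
  qed
  ultimately show ?thesis
    unfolding is_sol_def using Dr_staircase[OF assms] by simp
qed

lemma eq_staircase_if_grid_conditions:
  assumes "n > 0" "x * real n \<notin> \<int>" "x \<in> {-(1 / real n)..1 + 1 / real n}"
    and grid_conditions: "\<And>i::int.
      (x + i / n \<in> {0<..<1} \<longrightarrow> Dr (1 / real n) u (x + i / n) = 0) \<and>
      (x + i / n \<in> {-(1 / real n)..0} \<longrightarrow> u (x + i / n) = 0) \<and>
      (x + i / n \<in> {1..1 + 1 / real n} \<longrightarrow> u (x + i / n) = 1)"
  shows "u x = staircase n x"
proof -
  define k where "k = \<lfloor>x * real n\<rfloor>"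
  define \<theta> where "\<theta> = frac (x * real n)"
  have \<theta>: "0 < \<theta>" "\<theta> < 1" using assms(2) frac_lt_1 unfolding \<theta>_def by auto
  have grid: "x + of_int (j - k) / n = (of_int j + \<theta>) / n" for j
    using assms(1) by (simp add: k_def \<theta>_def frac_def field_simps)
  have grid_values: "u ((of_int j + \<theta>) / n) = (of_int j + 1) / (real n + 1)"
    if "-1 \<le> j" "j \<le> int n" for j
  proof (rule grid_values_eq[OF assms(1) _ _ _ that])
    fix i :: int assume "0 \<le> i" "i < int n"
    then have "(of_int i + \<theta>) / n \<in> {0<..<1}"
      using assms(1) \<theta> by (simp add: field_simps)
    then show "Dr (1 / real n) u ((of_int i + \<theta>) / n) = 0"
      using grid_conditions[of "i - k"] grid[of i] by simp
  next
    have "(of_int (-1) + \<theta>) / n \<in> {-(1 / real n)..0}"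
      using assms(1) \<theta> by (simp add: field_simps)
    then show "u ((\<theta> - 1) / n) = 0"
      using grid_conditions[of "-1 - k"] grid[of "-1"] by simp
  next
    have "(of_int (int n) + \<theta>) / n \<in> {1..1 + 1 / real n}"
      using assms(1) \<theta> by (simp add: field_simps)
    then show "u ((n + \<theta>) / n) = 1"
      using grid_conditions[of "int n - k"] grid[of "int n"] by simp
  qed
  have "x * real n \<noteq> of_int (int n + 1)"
    using assms(2) by (metis Ints_of_int)
  then have "-1 \<le> k" "k \<le> int n"
    using assms(1,3) unfolding k_def by (auto simp: field_simps le_floor_iff floor_le_iff)
  then have "u ((of_int k + \<theta>) / n) = (of_int k + 1) / (real n + 1)"
    by (rule grid_values)
  moreover have "x = (of_int k + \<theta>) / n"
    using assms(1) by (simp add: k_def \<theta>_def frac_def)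
  ultimately show ?thesis
    unfolding staircase_def k_def[symmetric] by simp
qed

lemma sol_AE_eq_staircase:
  assumes "n > 0" "is_sol (1 / real n) u"
  shows "AE x in lebesgue. x \<in> {-(1 / real n)..1 + 1 / real n} \<longrightarrow> u x = staircase n x"
proof -
  have D: "AE x in lebesgue. x \<in> {0<..<1} \<longrightarrow> Dr (1 / real n) u x = 0"
   and L: "AE x in lebesgue. x \<in> {-(1 / real n)..0} \<longrightarrow> u x = 0"
   and R: "AE x in lebesgue. x \<in> {1..1 + 1 / real n} \<longrightarrow> u x = 1"
    using assms(2) unfolding is_sol_def by auto
  \<comment> \<open>Only countably many translates are involved, so a.e. \<open>x\<close> sees all three conditions
      at every grid point \<open>x + i/n\<close> at once.\<close>
  have "AE x in lebesgue. \<forall>i::int \<in> UNIV.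
      (x + i / n \<in> {0<..<1} \<longrightarrow> Dr (1 / real n) u (x + i / n) = 0) \<and>
      (x + i / n \<in> {-(1 / real n)..0} \<longrightarrow> u (x + i / n) = 0) \<and>
      (x + i / n \<in> {1..1 + 1 / real n} \<longrightarrow> u (x + i / n) = 1)"
    using AE_lebesgue_translate[OF D] AE_lebesgue_translate[OF L] AE_lebesgue_translate[OF R]
    by (intro AE_ball_countable') (auto intro!: eventually_conj)
  with AE_lebesgue_mult_not_Ints[OF assms(1)] show ?thesis
    by eventually_elim (use assms(1) eq_staircase_if_grid_conditions in blast)
qed

lemma continuous_on_eq_const_if_AE:
  fixes w :: "real \<Rightarrow> real"
  assumes w: "continuous_on {lo..hi} w"
    and ae: "AE x in lebesgue. x \<in> {a<..<b} \<longrightarrow> w x = c"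
    and "lo \<le> a" "b \<le> hi" "a < b" "p \<in> {a..b}"
  shows "w p = c"
proof -
  let ?C = "{x \<in> {lo..hi}. w x = c}"
  have closed: "closed ?C"
    using continuous_closed_preimage_constant[OF w closed_atLeastAtMost] .
  have "x \<in> ?C" if "x \<in> {a<..<b}" for x
  proof (rule mem_closed_if_AE_lebesgue_open[OF _ closed _ that])
    show "AE x \<in> {a<..<b} in lebesgue. x \<in> ?C"
      using ae by eventually_elim (use assms in auto)
  qed simp
  then have "closure {a<..<b} \<subseteq> ?C"
    using closed by (intro closure_minimal) auto
  then show ?thesis using assms by auto
qed

lemma staircase_no_continuous_representative:
  assumes "n > 0"
  shows "\<not> (\<exists>w. continuous_on {-(1 / real n)..1 + 1 / real n} w \<and>
            (AE x in lebesgue. x \<in> {-(1 / real n)..1 + 1 / real n} \<longrightarrow> staircase n x = w x))"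
proof
  assume "\<exists>w. continuous_on {-(1 / real n)..1 + 1 / real n} w \<and>
            (AE x in lebesgue. x \<in> {-(1 / real n)..1 + 1 / real n} \<longrightarrow> staircase n x = w x)"
  then obtain w where w: "continuous_on {-(1 / real n)..1 + 1 / real n} w"
    and ae: "AE x in lebesgue. x \<in> {-(1 / real n)..1 + 1 / real n} \<longrightarrow> staircase n x = w x"
    by blast
  have "AE x in lebesgue. x \<in> {-(1 / real n)<..<0} \<longrightarrow> w x = 0"
    using ae by eventually_elim (use assms staircase_eq_0 in auto)
  then have "w 0 = 0"
    by (rule continuous_on_eq_const_if_AE[OF w]) (use assms in auto)
  moreover have "AE x in lebesgue. x \<in> {0<..<1 / real n} \<longrightarrow> w x = 1 / (real n + 1)"
    using ae by eventually_elim (use assms staircase_eq_first_step in auto)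
  then have "w 0 = 1 / (real n + 1)"
    by (rule continuous_on_eq_const_if_AE[OF w]) (use assms in auto)
  ultimately show False by simp
qed

theorem corollary1p11:
  fixes n :: nat
  assumes "n > 1"
  shows "(\<exists>u. is_sol (1 / real n) u) \<and>
         (\<forall>u v. is_sol (1 / real n) u \<longrightarrow> is_sol (1 / real n) v \<longrightarrow>
            (AE x in lebesgue. x \<in> {-(1 / real n)..1 + 1 / real n} \<longrightarrow> u x = v x)) \<and>
         (\<forall>u. is_sol (1 / real n) u \<longrightarrow>
            \<not> (\<exists>w. continuous_on {-(1 / real n)..1 + 1 / real n} w \<and>
                 (AE x in lebesgue. x \<in> {-(1 / real n)..1 + 1 / real n} \<longrightarrow> u x = w x)))"
proof -
  have n: "n > 0" using assms by simp
  let ?I = "{-(1 / real n)..1 + 1 / real n}"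
  have unique: "AE x in lebesgue. x \<in> ?I \<longrightarrow> u x = v x"
    if "is_sol (1 / real n) u" "is_sol (1 / real n) v" for u v
    using sol_AE_eq_staircase[OF n that(1)] sol_AE_eq_staircase[OF n that(2)]
    by eventually_elim auto
  have discontinuous: "\<not> (\<exists>w. continuous_on ?I w \<and> (AE x in lebesgue. x \<in> ?I \<longrightarrow> u x = w x))"
    if "is_sol (1 / real n) u" for u
  proof
    assume "\<exists>w. continuous_on ?I w \<and> (AE x in lebesgue. x \<in> ?I \<longrightarrow> u x = w x)"
    then obtain w where "continuous_on ?I w" and "AE x in lebesgue. x \<in> ?I \<longrightarrow> u x = w x"
      by blast
    moreover from this(2) sol_AE_eq_staircase[OF n that]
    have "AE x in lebesgue. x \<in> ?I \<longrightarrow> staircase n x = w x"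
      by eventually_elim auto
    ultimately show False
      using staircase_no_continuous_representative[OF n] by blast
  qed
  show ?thesis
    using staircase_is_sol[OF n] unique discontinuous by blast
qed

end
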